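(* Let $\mathcal{G}=(\mathcal{V},\mathcal{E})$ be a connected undirected graph (a transmission network) with nodes $\mathcal{V}=\{1,\dots,N\}$ and edges $e_1,\dots,e_L$, $\mathcal{L}=\{1,\dots,L\}$, each edge given a fixed orientation, with incidence matrix $\mathbf{Q}=(q_{il})\in\mathbb{R}^{N\times L}$ ($q_{il}=1$ if $i$ is the initial node of $e_l$, $-1$ if it is the terminal node, $0$ otherwise). For each node $i\in\mathcal{V}$ let $T'_{doi}>0$, $X_{di}>X'_{di}$, $B_{ii}<0$, set $\alpha_i=\frac{1}{X_{di}-X'_{di}}-B_{ii}$ and $\gamma_i=\frac{T'_{doi}}{X_{di}-X'_{di}}$, and consider the scalar linear node plant $$H^V_{pi}:\ \dot x^V_{pi}=-\tfrac{\alpha_i}{\gamma_i}x^V_{pi}+\tfrac{1}{\gamma_i}u^V_{pi},\qquad y^V_{pi}=x^V_{pi}.$$ For each edge $l\in\mathcal{L}$ let $\tau^V_l>0$, $K^V_{l[1]}>0$ and consider the edge controller $$H^V_{cl}:\ \dot x^V_{cl}=-\tfrac{1}{\tau^V_l}x^V_{cl}+\tfrac{K^V_{l[1]}}{\tau^V_l}u^V_{cl},\qquad y^V_{cl}=x^V_{cl}.$$ Consider the negative feedback interconnection in which, for each edge $e_l$ with initial node $i$ and terminal node $j$, $u^V_{cl}=y^V_{pi}-y^V_{pj}$, and for each node $i$, $u^V_{pi}=-\sum_{l=1}^L q_{il}y^V_{cl}$. Then this closed-loop system achieves output consensus: there exists an open domain $\mathcal{D}_c$ in the joint state space containing the origin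 such that $\lim_{t\to\infty}|y^V_{pi}(t)-y^V_{pj}(t)|=0$ for all $i,j\in\mathcal{V}$ and all initial conditions in $\mathcal{D}_c$.
   Context: In the application, $x^V_{pi}$ is the deviation of the voltage magnitude of generator bus $i$ from its nominal value; $T'_{doi}$ is the direct axis transient open-circuit time constant, $X_{di}$ and $X'_{di}$ the direct axis synchronous and transient reactances, and $B_{ii}$ the self-susceptance. *)

theory Defs
  imports "HOL-Analysis.Analysis"
begin

text \<open>An oriented multigraph: edges of the finite type 'e, nodes of the finite type 'n;
  edge l goes from node src l (initial) to node tgt l (terminal).\<close>

definition incidence :: "('e \<Rightarrow> 'n) \<Rightarrow> ('e \<Rightarrow> 'n) \<Rightarrow> 'n \<Rightarrow> 'e \<Rightarrow> real" where
  "incidence src tgt i l = (if src l = i then 1 else if tgt l = i then -1 else 0)"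

definition graph_connected :: "('e \<Rightarrow> 'n) \<Rightarrow> ('e \<Rightarrow> 'n) \<Rightarrow> bool" where
  "graph_connected src tgt \<longleftrightarrow>
     (\<forall>i j. (i, j) \<in> ({(src l, tgt l) | l. True} \<union> {(tgt l, src l) | l. True})\<^sup>*)"

definition alpha_c :: "real \<Rightarrow> real \<Rightarrow> real \<Rightarrow> real" where
  "alpha_c Xd Xd' B = 1 / (Xd - Xd') - B"

definition gamma_c :: "real \<Rightarrow> real \<Rightarrow> real \<Rightarrow> real" where
  "gamma_c Tdo Xd Xd' = Tdo / (Xd - Xd')"

definition closed_loop_solution ::
  "('e \<Rightarrow> 'n) \<Rightarrow> ('e \<Rightarrow> 'n) \<Rightarrow> ('n \<Rightarrow> real) \<Rightarrow> ('n \<Rightarrow> real) \<Rightarrow> ('n \<Rightarrow> real) \<Rightarrow> ('n \<Rightarrow> real)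
   \<Rightarrow> ('e \<Rightarrow> real) \<Rightarrow> ('e \<Rightarrow> real)
   \<Rightarrow> (real \<Rightarrow> real^'n::finite) \<Rightarrow> (real \<Rightarrow> real^'e::finite) \<Rightarrow> bool" where
  "closed_loop_solution src tgt Tdo Xd Xd' B tau K xp xc \<longleftrightarrow>
     (\<forall>t\<ge>0.
        (xp has_vector_derivative
           (\<chi> i. - (alpha_c (Xd i) (Xd' i) (B i) / gamma_c (Tdo i) (Xd i) (Xd' i)) * (xp t $ i)
                 + (1 / gamma_c (Tdo i) (Xd i) (Xd' i))
                   * (- (\<Sum>l\<in>UNIV. incidence src tgt i l * (xc t $ l))))) (at t within {0..})
      \<and> (xc has_vector_derivative
           (\<chi> l. - (1 / tau l) * (xc t $ l)
                 + (K l / tau l) * ((xp t $ src l) - (xp t $ tgt l)))) (at t within {0..}))"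

end

theory Submission
  imports Defs "HOL-Real_Asymp.Real_Asymp"
begin

(* Since B_ii < 0 we have alpha_i > 0, so every node plant is strictly passive. Along a
   closed-loop trajectory the storage function
     V = sum_i gamma_i x_pi^2 + sum_l (tau_l / K_l) x_cl^2
   has derivative -2 (sum_i alpha_i x_pi^2 + sum_l x_cl^2 / K_l): the interconnection
   u_p = -Q y_c, u_c = Q^T y_p is skew-symmetric, so the cross terms cancel. This
   dissipation dominates c V for some c > 0, hence V decays exponentially and every state
   tends to 0. *)

lemma deriv_le_imp_exp_decay:
  fixes V V' :: "real \<Rightarrow> real"
  assumes deriv: "\<And>t. t \<ge> 0 \<Longrightarrow> (V has_real_derivative V' t) (at t within {0..})"
    and decay: "\<And>t. t \<ge> 0 \<Longrightarrow> V' t \<le> - c * V t"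
    and "T \<ge> 0"
  shows "V T \<le> exp (- c * T) * V 0"
proof -
  define W where "W t = exp (c * t) * V t" for t
  have dW: "(W has_real_derivative exp (c * t) * (V' t + c * V t)) (at t within {0..})"
    if "t \<ge> 0" for t
    unfolding W_def by (rule derivative_eq_intros deriv[OF that] refl | simp add: algebra_simps)+
  have "W T \<le> W 0"
  proof (rule DERIV_nonpos_imp_decreasing_open[OF \<open>T \<ge> 0\<close>])
    fix t assume "0 < t" "t < T"
    have "at t within {0..} = at t"
      by (rule at_within_interior) (use \<open>0 < t\<close> in simp)
    then have "(W has_real_derivative exp (c * t) * (V' t + c * V t)) (at t)"
      using dW[of t] \<open>0 < t\<close> by simp
    moreover have "exp (c * t) * (V' t + c * V t) \<le> 0"
      using decay[of t] \<open>0 < t\<close> by (simp add: mult_nonneg_nonpos)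
    ultimately show "\<exists>y. (W has_real_derivative y) (at t) \<and> y \<le> 0" by blast
  next
    show "continuous_on {0..T} W"
      by (rule DERIV_continuous_on[OF DERIV_subset[OF dW]]) auto
  qed
  then show ?thesis
    by (simp add: W_def exp_minus field_simps)
qed

lemma tendsto_zero_of_square_le_exp_decay:
  fixes f :: "real \<Rightarrow> real"
  assumes "c > 0" and bound: "\<And>t. t \<ge> 0 \<Longrightarrow> (f t)\<^sup>2 \<le> M * exp (- c * t)"
  shows "(f \<longlongrightarrow> 0) at_top"
proof -
  have decay: "((\<lambda>t. M * exp (- c * t)) \<longlongrightarrow> 0) at_top"
    using \<open>c > 0\<close> by real_asymp
  have "\<forall>\<^sub>F t in at_top. (f t)\<^sup>2 \<le> M * exp (- c * t)"
    using eventually_ge_at_top[of 0] by eventually_elim (rule bound)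
  then have "((\<lambda>t. (f t)\<^sup>2) \<longlongrightarrow> 0) at_top"
    by (intro tendsto_sandwich[OF _ _ tendsto_const decay, of "\<lambda>t. (f t)\<^sup>2"]) simp_all
  from tendsto_real_sqrt[OF this] have "((\<lambda>t. \<bar>f t\<bar>) \<longlongrightarrow> 0) at_top"
    by simp
  then show ?thesis
    by (simp add: tendsto_rabs_zero_iff)
qed

lemma finite_exists_pos_mult_le:
  fixes a b :: "'a::finite \<Rightarrow> real"
  assumes "\<And>i. a i > 0" and "\<And>i. b i > 0"
  shows "\<exists>c>0. \<forall>i. c * b i \<le> a i"
proof (intro exI conjI allI)
  show "Min (range (\<lambda>i. a i / b i)) > 0"
    using assms by (subst Min_gr_iff) auto
  fix i
  have "Min (range (\<lambda>i. a i / b i)) \<le> a i / b i"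
    by (rule Min_le) auto
  then show "Min (range (\<lambda>i. a i / b i)) * b i \<le> a i"
    using assms(2)[of i] by (simp add: pos_le_divide_eq)
qed

lemma sum_incidence_mult:
  fixes src tgt :: "'e \<Rightarrow> 'n::finite"
  assumes "src l \<noteq> tgt l"
  shows "(\<Sum>i\<in>UNIV. incidence src tgt i l * x i) = x (src l) - x (tgt l)"
proof -
  have "incidence src tgt i l * x i
      = (if src l = i then x i else 0) - (if tgt l = i then x i else 0)" for i
    using assms by (auto simp: incidence_def)
  then show ?thesis
    by (simp add: sum_subtractf)
qed

lemma sum_mult_incidence_sum:
  fixes src tgt :: "'e::finite \<Rightarrow> 'n::finite"
  assumes "\<And>l. src l \<noteq> tgt l"
  shows "(\<Sum>i\<in>UNIV. x i * (\<Sum>l\<in>UNIV. incidence src tgt i l * y l))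
       = (\<Sum>l\<in>UNIV. y l * (x (src l) - x (tgt l)))"
proof -
  have "(\<Sum>i\<in>UNIV. x i * (\<Sum>l\<in>UNIV. incidence src tgt i l * y l))
      = (\<Sum>i\<in>UNIV. \<Sum>l\<in>UNIV. y l * (incidence src tgt i l * x i))"
    by (simp add: sum_distrib_left algebra_simps)
  also have "\<dots> = (\<Sum>l\<in>UNIV. y l * (\<Sum>i\<in>UNIV. incidence src tgt i l * x i))"
    by (subst sum.swap) (simp add: sum_distrib_left)
  finally show ?thesis
    by (simp add: sum_incidence_mult assms)
qed

lemma alpha_c_pos: "Xd > Xd' \<Longrightarrow> B < 0 \<Longrightarrow> alpha_c Xd Xd' B > 0"
  unfolding alpha_c_def by (smt (verit) zero_less_divide_1_iff)

lemma gamma_c_pos: "Tdo > 0 \<Longrightarrow> Xd > Xd' \<Longrightarrow> gamma_c Tdo Xd Xd' > 0"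
  by (simp add: gamma_c_def)

definition closed_loop_energy ::
  "('n \<Rightarrow> real) \<Rightarrow> ('e \<Rightarrow> real) \<Rightarrow> ('e \<Rightarrow> real)
    \<Rightarrow> real^'n::finite \<Rightarrow> real^'e::finite \<Rightarrow> real" where
  "closed_loop_energy g tau K x z =
     (\<Sum>i\<in>UNIV. g i * (x $ i)\<^sup>2) + (\<Sum>l\<in>UNIV. tau l / K l * (z $ l)\<^sup>2)"

definition closed_loop_dissipation ::
  "('n \<Rightarrow> real) \<Rightarrow> ('e \<Rightarrow> real) \<Rightarrow> real^'n::finite \<Rightarrow> real^'e::finite \<Rightarrow> real" where
  "closed_loop_dissipation a K x z =
     (\<Sum>i\<in>UNIV. a i * (x $ i)\<^sup>2) + (\<Sum>l\<in>UNIV. (z $ l)\<^sup>2 / K l)"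

lemma closed_loop_energy_ge_node:
  assumes "\<And>i. g i > 0" and "\<And>l. tau l > 0" and "\<And>l. K l > 0"
  shows "g i * (x $ i)\<^sup>2 \<le> closed_loop_energy g tau K x z"
proof -
  have "g i * (x $ i)\<^sup>2 \<le> (\<Sum>i\<in>UNIV. g i * (x $ i)\<^sup>2)"
    using assms(1) by (intro member_le_sum) (auto simp: less_imp_le)
  also have "\<dots> \<le> closed_loop_energy g tau K x z"
    unfolding closed_loop_energy_def using assms(2,3)
    by (simp add: sum_nonneg less_imp_le)
  finally show ?thesis .
qed

lemma closed_loop_dissipation_ge_energy:
  fixes a g :: "'n::finite \<Rightarrow> real" and tau K :: "'e::finite \<Rightarrow> real"
  assumes a_pos: "\<And>i. a i > 0" and g_pos: "\<And>i. g i > 0"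
    and tau_pos: "\<And>l. tau l > 0" and K_pos: "\<And>l. K l > 0"
  shows "\<exists>c>0. \<forall>x z. c * closed_loop_energy g tau K x z \<le> closed_loop_dissipation a K x z"
proof -
  obtain c1 where "c1 > 0" and c1: "\<And>i. c1 * g i \<le> a i"
    using finite_exists_pos_mult_le[of a g] a_pos g_pos by blast
  obtain c2 where "c2 > 0" and c2: "\<And>l. c2 * tau l \<le> 1"
    using finite_exists_pos_mult_le[of "\<lambda>_. 1" tau] tau_pos by auto
  define c where "c = min c1 c2"
  have node: "c * (g i * (x $ i)\<^sup>2) \<le> a i * (x $ i)\<^sup>2" for x :: "real^'n" and i
  proof -
    have "c * g i \<le> a i"
      using c1[of i] g_pos[of i] by (smt (verit) c_def mult_right_mono min.cobounded1)
    then show ?thesis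
      by (simp add: mult.assoc[symmetric] mult_right_mono)
  qed
  have edge: "c * (tau l / K l * (z $ l)\<^sup>2) \<le> (z $ l)\<^sup>2 / K l" for z :: "real^'e" and l
  proof -
    have "c * tau l \<le> 1"
      using c2[of l] tau_pos[of l] by (smt (verit) c_def mult_right_mono min.cobounded2)
    then have "c * tau l * ((z $ l)\<^sup>2 / K l) \<le> 1 * ((z $ l)\<^sup>2 / K l)"
      using K_pos[of l] by (intro mult_right_mono) auto
    then show ?thesis by simp
  qed
  have "c * closed_loop_energy g tau K x z \<le> closed_loop_dissipation a K x z" for x z
    unfolding closed_loop_energy_def closed_loop_dissipation_def distrib_left sum_distrib_left
    by (intro add_mono sum_mono node edge)
  moreover have "c > 0"
    using \<open>c1 > 0\<close> \<open>c2 > 0\<close> by (simp add: c_def)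
  ultimately show ?thesis by blast
qed

lemma closed_loop_energy_has_derivative:
  fixes src tgt :: "'e::finite \<Rightarrow> 'n::finite" and Tdo Xd Xd' B :: "'n \<Rightarrow> real"
  defines "a \<equiv> \<lambda>i. alpha_c (Xd i) (Xd' i) (B i)" and "g \<equiv> \<lambda>i. gamma_c (Tdo i) (Xd i) (Xd' i)"
  assumes sol: "closed_loop_solution src tgt Tdo Xd Xd' B tau K xp xc"
    and no_loops: "\<And>l. src l \<noteq> tgt l"
    and g_pos: "\<And>i. g i > 0" and tau_pos: "\<And>l. tau l > 0" and K_pos: "\<And>l. K l > 0"
    and "t \<ge> 0"
  shows "((\<lambda>s. closed_loop_energy g tau K (xp s) (xc s)) has_real_derivative
           - 2 * closed_loop_dissipation a K (xp t) (xc t)) (at t within {0..})"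
proof -
  define u where "u i = - (\<Sum>l\<in>UNIV. incidence src tgt i l * xc t $ l)" for i
  define w where "w l = xp t $ src l - xp t $ tgt l" for l
  have "(xp has_vector_derivative (\<chi> i. - (a i / g i) * xp t $ i + 1 / g i * u i))
          (at t within {0..})"
    and "(xc has_vector_derivative (\<chi> l. - (1 / tau l) * xc t $ l + K l / tau l * w l))
          (at t within {0..})"
    using sol \<open>t \<ge> 0\<close> unfolding closed_loop_solution_def a_def g_def u_def w_def by auto
  from this[THEN bounded_linear.has_vector_derivative[OF bounded_linear_vec_nth]]
  have dp: "\<And>i. ((\<lambda>s. xp s $ i) has_real_derivative
              - (a i / g i) * xp t $ i + 1 / g i * u i) (at t within {0..})"
    and dc: "\<And>l. ((\<lambda>s. xc s $ l) has_real_derivative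
              - (1 / tau l) * xc t $ l + K l / tau l * w l) (at t within {0..})"
    by (simp_all add: has_real_derivative_iff_has_vector_derivative)
  have node: "((\<lambda>s. g i * (xp s $ i)\<^sup>2) has_real_derivative
      - 2 * (a i * (xp t $ i)\<^sup>2) + 2 * (xp t $ i * u i)) (at t within {0..})" for i
    using g_pos[of i]
    by (auto intro!: derivative_eq_intros dp simp: field_simps power2_eq_square)
  have edge: "((\<lambda>s. tau l / K l * (xc s $ l)\<^sup>2) has_real_derivative
      - 2 * ((xc t $ l)\<^sup>2 / K l) + 2 * (xc t $ l * w l)) (at t within {0..})" for l
    using tau_pos[of l] K_pos[of l]
    by (auto intro!: derivative_eq_intros dc simp: field_simps power2_eq_square)
  have "((\<lambda>s. closed_loop_energy g tau K (xp s) (xc s)) has_real_derivative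
      (\<Sum>i\<in>UNIV. - 2 * (a i * (xp t $ i)\<^sup>2) + 2 * (xp t $ i * u i))
      + (\<Sum>l\<in>UNIV. - 2 * ((xc t $ l)\<^sup>2 / K l) + 2 * (xc t $ l * w l))) (at t within {0..})"
    unfolding closed_loop_energy_def by (intro DERIV_add DERIV_sum node edge)
  moreover have "(\<Sum>i\<in>UNIV. xp t $ i * u i) + (\<Sum>l\<in>UNIV. xc t $ l * w l) = 0"
    using sum_mult_incidence_sum[OF no_loops, where x = "\<lambda>i. xp t $ i" and y = "\<lambda>l. xc t $ l"]
    unfolding u_def w_def by (simp add: sum_negf)
  then have "(\<Sum>i\<in>UNIV. - 2 * (a i * (xp t $ i)\<^sup>2) + 2 * (xp t $ i * u i))
      + (\<Sum>l\<in>UNIV. - 2 * ((xc t $ l)\<^sup>2 / K l) + 2 * (xc t $ l * w l))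
      = - 2 * closed_loop_dissipation a K (xp t) (xc t)"
    unfolding closed_loop_dissipation_def sum.distrib sum_distrib_left[symmetric] by simp
  ultimately show ?thesis
    by simp
qed

lemma closed_loop_solution_tendsto_zero:
  fixes src tgt :: "'e::finite \<Rightarrow> 'n::finite"
  assumes sol: "closed_loop_solution src tgt Tdo Xd Xd' B tau K xp xc"
    and no_loops: "\<And>l. src l \<noteq> tgt l"
    and a_pos: "\<And>i. alpha_c (Xd i) (Xd' i) (B i) > 0"
    and g_pos: "\<And>i. gamma_c (Tdo i) (Xd i) (Xd' i) > 0"
    and tau_pos: "\<And>l. tau l > 0" and K_pos: "\<And>l. K l > 0"
  shows "((\<lambda>t. xp t $ i) \<longlongrightarrow> 0) at_top"
proof -
  define a where "a i = alpha_c (Xd i) (Xd' i) (B i)" for i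
  define g where "g i = gamma_c (Tdo i) (Xd i) (Xd' i)" for i
  define V where "V t = closed_loop_energy g tau K (xp t) (xc t)" for t
  obtain c where "c > 0"
    and c: "\<And>x z. c * closed_loop_energy g tau K x z \<le> closed_loop_dissipation a K x z"
    using closed_loop_dissipation_ge_energy[of a g tau K] a_pos g_pos tau_pos K_pos
    unfolding a_def g_def by blast
  have "V t \<le> exp (- (2 * c) * t) * V 0" if "t \<ge> 0" for t
  proof (rule deriv_le_imp_exp_decay[OF _ _ that])
    show "(V has_real_derivative - 2 * closed_loop_dissipation a K (xp s) (xc s)) (at s within {0..})"
      if "s \<ge> 0" for s
      unfolding V_def a_def g_def
      by (rule closed_loop_energy_has_derivative[OF sol no_loops g_pos tau_pos K_pos that])
    show "- 2 * closed_loop_dissipation a K (xp s) (xc s) \<le> - (2 * c) * V s" for s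
      using c[of "xp s" "xc s"] unfolding V_def by simp
  qed
  moreover have "g i * (xp t $ i)\<^sup>2 \<le> V t" for t
    unfolding V_def using g_pos tau_pos K_pos
    by (intro closed_loop_energy_ge_node) (simp_all add: g_def)
  ultimately have energy_bound: "g i * (xp t $ i)\<^sup>2 \<le> exp (- (2 * c) * t) * V 0"
    if "t \<ge> 0" for t
    using that by (meson order.trans)
  have "(xp t $ i)\<^sup>2 \<le> V 0 / g i * exp (- (2 * c) * t)" if "t \<ge> 0" for t
    using energy_bound[OF that] g_pos[of i] by (simp add: g_def pos_le_divide_eq mult.commute)
  with \<open>c > 0\<close> show ?thesis
    by (intro tendsto_zero_of_square_le_exp_decay[where c = "2 * c" and M = "V 0 / g i"]) auto
qed

theorem theorem4:
  fixes src tgt :: "'e::finite \<Rightarrow> 'n::finite"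
    and Tdo Xd Xd' B :: "'n \<Rightarrow> real"
    and tau K :: "'e \<Rightarrow> real"
  assumes no_loops: "\<And>l. src l \<noteq> tgt l"
    and conn: "graph_connected src tgt"
    and Tdo_pos: "\<And>i. Tdo i > 0"
    and Xd_gt: "\<And>i. Xd i > Xd' i"
    and B_neg: "\<And>i. B i < 0"
    and tau_pos: "\<And>l. tau l > 0"
    and K_pos: "\<And>l. K l > 0"
  shows "\<exists>D :: ((real^'n) \<times> (real^'e)) set. open D \<and> (0, 0) \<in> D \<and>
           (\<forall>xp xc. closed_loop_solution src tgt Tdo Xd Xd' B tau K xp xc
                 \<and> (xp 0, xc 0) \<in> D \<longrightarrow>
              (\<forall>i j. ((\<lambda>t. \<bar>xp t $ i - xp t $ j\<bar>) \<longlongrightarrow> 0) at_top))"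
proof (intro exI[of _ UNIV] conjI allI impI)
  fix xp xc i j
  assume "closed_loop_solution src tgt Tdo Xd Xd' B tau K xp xc \<and> (xp 0, xc 0) \<in> UNIV"
  then have "((\<lambda>t. xp t $ k) \<longlongrightarrow> 0) at_top" for k
    using no_loops alpha_c_pos[OF Xd_gt B_neg] gamma_c_pos[OF Tdo_pos Xd_gt] tau_pos K_pos
    by (intro closed_loop_solution_tendsto_zero) auto
  from tendsto_rabs[OF tendsto_diff[OF this[of i] this[of j]]]
  show "((\<lambda>t. \<bar>xp t $ i - xp t $ j\<bar>) \<longlongrightarrow> 0) at_top"
    by simp
qed auto

end
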